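(* In the setting described in the context, suppose that $$\sum_{x\in A}\alpha_x<\sum_{y\in N(A)}\beta_y\qquad\text{for all nonempty } A\subseteq\mathcal X,$$ where $N(A)=\bigcup_{x\in A}N_x$. Then the graph $\mathcal L$ is connected.
   Context: $\mathcal X$ is a finite set of units, $\mathcal G=(\mathcal X,\mathcal E)$ a directed graph, $N_x=\{y:(x,y)\in\mathcal E\}$, $\alpha_x,\beta_x$ non-negative integers. An allocation state is a matrix $W\in\mathbb N^{\mathcal X\times\mathcal X}$ with $W_{xy}=0$ whenever $(x,y)\notin\mathcal E$, $W^x:=\sum_yW_{xy}=\alpha_x$ for all $x$, and $W_y:=\sum_xW_{xy}\le\beta_y$ for all $y$; $\mathcal W$ is the set of allocation states and $e_{xy}$ the matrix unit. $\mathcal L$ is the graph on $\mathcal W$ in which $W$ and $W'$ are adjacent iff $W'=W-e_{xy}+e_{xy'}$ for some $x$ and some $y\ne y'$ with $W_{xy}>0$, $y'\in N_x$, $W_{y'}<\beta_{y'}$ (these are exactly the positive-rate transitions of the paper's noisy best-response storage dynamics restricted to $\mathcal W$, under its standing assumption that unit activation rates are $\nu_x=\nu\alpha_x$ with $\nu>0$). *)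

theory Defs
  imports Main
begin

definition nbr :: "('a \<times> 'a) set \<Rightarrow> 'a \<Rightarrow> 'a set" where
  "nbr E x = {y. (x, y) \<in> E}"

definition nbr_set :: "('a \<times> 'a) set \<Rightarrow> 'a set \<Rightarrow> 'a set" where
  "nbr_set E A = (\<Union>x\<in>A. nbr E x)"

definition row_sum :: "'a set \<Rightarrow> ('a \<Rightarrow> 'a \<Rightarrow> nat) \<Rightarrow> 'a \<Rightarrow> nat" where
  "row_sum X W x = (\<Sum>y\<in>X. W x y)"

definition col_sum :: "'a set \<Rightarrow> ('a \<Rightarrow> 'a \<Rightarrow> nat) \<Rightarrow> 'a \<Rightarrow> nat" where
  "col_sum X W y = (\<Sum>x\<in>X. W x y)"

definition alloc_states ::
  "'a set \<Rightarrow> ('a \<times> 'a) set \<Rightarrow> ('a \<Rightarrow> nat) \<Rightarrow> ('a \<Rightarrow> nat) \<Rightarrow> ('a \<Rightarrow> 'a \<Rightarrow> nat) set" where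
  "alloc_states X E \<alpha> \<beta> = {W. (\<forall>x y. (x, y) \<notin> E \<longrightarrow> W x y = 0)
      \<and> (\<forall>x\<in>X. row_sum X W x = \<alpha> x)
      \<and> (\<forall>y\<in>X. col_sum X W y \<le> \<beta> y)}"

definition move :: "('a \<Rightarrow> 'a \<Rightarrow> nat) \<Rightarrow> 'a \<Rightarrow> 'a \<Rightarrow> 'a \<Rightarrow> 'a \<Rightarrow> 'a \<Rightarrow> nat" where
  "move W x y y' = (\<lambda>a b. if a = x \<and> b = y then W a b - 1
                           else if a = x \<and> b = y' then W a b + 1 else W a b)"

definition trans_step ::
  "'a set \<Rightarrow> ('a \<times> 'a) set \<Rightarrow> ('a \<Rightarrow> nat) \<Rightarrow> ('a \<Rightarrow> 'a \<Rightarrow> nat) \<Rightarrow> ('a \<Rightarrow> 'a \<Rightarrow> nat) \<Rightarrow> bool" where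
  "trans_step X E \<beta> W W' = (\<exists>x y y'. y \<noteq> y' \<and> W x y > 0 \<and> y' \<in> nbr E x
       \<and> col_sum X W y' < \<beta> y' \<and> W' = move W x y y')"

definition L_edges ::
  "'a set \<Rightarrow> ('a \<times> 'a) set \<Rightarrow> ('a \<Rightarrow> nat) \<Rightarrow> ('a \<Rightarrow> nat) \<Rightarrow> (('a \<Rightarrow> 'a \<Rightarrow> nat) \<times> ('a \<Rightarrow> 'a \<Rightarrow> nat)) set" where
  "L_edges X E \<alpha> \<beta> = {(W, W'). W \<in> alloc_states X E \<alpha> \<beta> \<and> W' \<in> alloc_states X E \<alpha> \<beta>
      \<and> (trans_step X E \<beta> W W' \<or> trans_step X E \<beta> W' W)}"

definition L_connected :: "'a set \<Rightarrow> ('a \<times> 'a) set \<Rightarrow> ('a \<Rightarrow> nat) \<Rightarrow> ('a \<Rightarrow> nat) \<Rightarrow> bool" where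
  "L_connected X E \<alpha> \<beta> = (\<forall>W\<in>alloc_states X E \<alpha> \<beta>. \<forall>W'\<in>alloc_states X E \<alpha> \<beta>.
      (W, W') \<in> (L_edges X E \<alpha> \<beta>)\<^sup>*)"

end

theory Submission
  imports Defs
begin

text \<open>Two allocation states \<open>W\<close>, \<open>W'\<close> are joined by induction on their L1 distance: since
  the graph is symmetric it suffices to reach, from \<open>W\<close> and from \<open>W'\<close>, two closer states.
  If a column \<open>y\<close> with slack in \<open>W\<close> has \<open>W x y < W' x y\<close>, moving a token of \<open>x\<close> into \<open>y\<close>
  from a column where \<open>W\<close> exceeds \<open>W'\<close> lowers the distance by two; likewise with the roles
  exchanged. Otherwise, moves performed simultaneously in \<open>W\<close> and \<open>W'\<close> along cells occupied
  in both keep \<open>W - W'\<close> fixed and create slack in every column reachable this way from a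
  column with slack in both; an excess cell of \<open>W\<close> in, or next to, such a column again yields
  a decrease. If there is none, the remaining columns are saturated in \<open>W\<close> and contain the
  neighbourhood of every unit occupying them, so for the set \<open>A\<close> of these units the capacity
  of \<open>N(A)\<close> is at most the demand of \<open>A\<close>, contradicting the strict Hall condition.\<close>

locale allocation =
  fixes X :: "'a set" and E :: "('a \<times> 'a) set" and \<alpha> \<beta> :: "'a \<Rightarrow> nat"
  assumes finite_X: "finite X" and edges_in_X: "E \<subseteq> X \<times> X"
begin

abbreviation states where "states \<equiv> alloc_states X E \<alpha> \<beta>"
abbreviation moves where "moves \<equiv> L_edges X E \<alpha> \<beta>"

lemma state_support:
  assumes "V \<in> states" "0 < V x y"
  shows "(x, y) \<in> E" "x \<in> X" "y \<in> X"
proof -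
  show xy: "(x, y) \<in> E"
    using assms unfolding alloc_states_def by (metis (mono_tags, lifting) CollectD less_irrefl)
  show "x \<in> X" "y \<in> X" using xy edges_in_X by auto
qed

lemma state_row_sum: "V \<in> states \<Longrightarrow> x \<in> X \<Longrightarrow> row_sum X V x = \<alpha> x"
  unfolding alloc_states_def by auto

lemma state_col_sum: "V \<in> states \<Longrightarrow> y \<in> X \<Longrightarrow> col_sum X V y \<le> \<beta> y"
  unfolding alloc_states_def by auto

lemma col_sum_move_source:
  assumes "x \<in> X" "a \<noteq> b" "0 < V x a"
  shows "col_sum X (move V x a b) a + 1 = col_sum X V a"
proof -
  have "V p a = move V x a b p a + (if p = x then 1 else 0)" for p
    using assms by (auto simp: move_def)
  then show ?thesis
    using assms(1) finite_X by (simp add: col_sum_def sum.distrib)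
qed

lemma col_sum_move_target:
  assumes "x \<in> X" "a \<noteq> b"
  shows "col_sum X (move V x a b) b = col_sum X V b + 1"
proof -
  have "move V x a b p b = V p b + (if p = x then 1 else 0)" for p
    using assms by (auto simp: move_def)
  then show ?thesis
    using assms(1) finite_X by (simp add: col_sum_def sum.distrib)
qed

lemma col_sum_move_other:
  "y \<noteq> a \<Longrightarrow> y \<noteq> b \<Longrightarrow> col_sum X (move V x a b) y = col_sum X V y"
  unfolding col_sum_def move_def by auto

lemma row_sum_move:
  assumes "a \<in> X" "b \<in> X" "a \<noteq> b" "0 < V x a"
  shows "row_sum X (move V x a b) p = row_sum X V p"
proof -
  have "(\<Sum>q\<in>X. move V x a b p q + (if q = a then of_bool (p = x) else 0))
      = (\<Sum>q\<in>X. V p q + (if q = b then of_bool (p = x) else 0))"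
    using assms by (intro sum.cong) (auto simp: move_def)
  then show ?thesis
    using assms(1,2) finite_X by (simp add: row_sum_def sum.distrib)
qed

lemma move_frees_source:
  assumes "V \<in> states" "x \<in> X" "a \<noteq> b" "0 < V x a"
  shows "col_sum X (move V x a b) a < \<beta> a"
  using col_sum_move_source[of x a b V] assms state_col_sum[OF assms(1) state_support(3)[OF assms(1,4)]]
  by linarith

lemma move_edge:
  assumes V: "V \<in> states" and pos: "0 < V x a" and nb: "b \<in> nbr E x" and "a \<noteq> b"
    and slack: "col_sum X V b < \<beta> b"
  shows "(V, move V x a b) \<in> moves"
proof -
  have "x \<in> X" "a \<in> X" using state_support[OF V pos] by auto
  moreover have "(x, b) \<in> E" "b \<in> X" using nb edges_in_X unfolding nbr_def by auto
  ultimately have "move V x a b \<in> states"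
    unfolding alloc_states_def
  proof (intro CollectI conjI allI impI ballI)
    fix p q assume "(p, q) \<notin> E"
    then show "move V x a b p q = 0"
      using V \<open>(x, b) \<in> E\<close> unfolding alloc_states_def move_def by auto
  next
    fix p assume "p \<in> X"
    then show "row_sum X (move V x a b) p = \<alpha> p"
      using row_sum_move \<open>a \<in> X\<close> \<open>b \<in> X\<close> assms(4) pos state_row_sum V by simp
  next
    fix q assume "q \<in> X"
    then have "col_sum X V q \<le> \<beta> q" using V state_col_sum by blast
    then show "col_sum X (move V x a b) q \<le> \<beta> q"
      using col_sum_move_source[of x a b V] col_sum_move_target[of x a b V]
        col_sum_move_other[of q a b V x] \<open>x \<in> X\<close> assms(4) pos slack
      by (cases "q = a"; cases "q = b") auto
  qed
  moreover have "trans_step X E \<beta> V (move V x a b)"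
    unfolding trans_step_def using assms by blast
  ultimately show ?thesis using V unfolding L_edges_def by auto
qed

lemma moves_sym: "sym moves"
  unfolding sym_def L_edges_def by auto

lemma moves_path_sym: "(V, V') \<in> moves\<^sup>* \<Longrightarrow> (V', V) \<in> moves\<^sup>*"
  by (metis moves_sym sym_rtrancl symD)

lemma moves_path_states: "(V, V') \<in> moves\<^sup>* \<Longrightarrow> V \<in> states \<Longrightarrow> V' \<in> states"
  by (induction rule: rtrancl_induct) (auto simp: L_edges_def)

definition l1_dist :: "('a \<Rightarrow> 'a \<Rightarrow> nat) \<Rightarrow> ('a \<Rightarrow> 'a \<Rightarrow> nat) \<Rightarrow> int" where
  "l1_dist V V' = (\<Sum>(x, y)\<in>X \<times> X. \<bar>int (V x y) - int (V' x y)\<bar>)"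

lemma l1_dist_nonneg: "0 \<le> l1_dist V V'"
  unfolding l1_dist_def by (intro sum_nonneg) auto

lemma l1_dist_commute: "l1_dist V V' = l1_dist V' V"
  unfolding l1_dist_def by (simp add: abs_minus_commute)

lemma l1_dist_same_difference:
  assumes "\<And>x y. V x y + W' x y = V' x y + W x y"
  shows "l1_dist V V' = l1_dist W W'"
proof -
  have "int (V x y) - int (V' x y) = int (W x y) - int (W' x y)" for x y
    using assms[of x y] by linarith
  then show ?thesis unfolding l1_dist_def by simp
qed

lemma l1_dist_move:
  assumes "x \<in> X" "a \<in> X" "b \<in> X" "a \<noteq> b" "0 < V x a"
  shows "l1_dist (move V x a b) V' = l1_dist V V'
    + (\<bar>int (V x a) - 1 - int (V' x a)\<bar> - \<bar>int (V x a) - int (V' x a)\<bar>)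
    + (\<bar>int (V x b) + 1 - int (V' x b)\<bar> - \<bar>int (V x b) - int (V' x b)\<bar>)"
    (is "_ = _ + ?da + ?db")
proof -
  have "(\<lambda>(p, q). \<bar>int (move V x a b p q) - int (V' p q)\<bar>) pq
      = (\<lambda>(p, q). \<bar>int (V p q) - int (V' p q)\<bar>) pq
        + (if pq = (x, a) then ?da else 0) + (if pq = (x, b) then ?db else 0)" for pq
    using assms by (cases pq) (auto simp: move_def of_nat_diff)
  then show ?thesis
    using assms finite_X unfolding l1_dist_def by (simp add: sum.distrib)
qed

lemma l1_dist_move_le:
  assumes "x \<in> X" "a \<in> X" "b \<in> X" "a \<noteq> b" "V' x a < V x a"
  shows "l1_dist (move V x a b) V' \<le> l1_dist V V'"
  using l1_dist_move[of x a b V V'] assms by simp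

lemma l1_dist_move_less:
  assumes "x \<in> X" "a \<in> X" "b \<in> X" "a \<noteq> b" "V' x a < V x a" "V x b < V' x b"
  shows "l1_dist (move V x a b) V' < l1_dist V V'"
  using l1_dist_move[of x a b V V'] assms by simp

lemma excess_in_row:
  assumes "V \<in> states" "V' \<in> states" "V w c < V' w c"
  shows "\<exists>c'\<in>X. V' w c' < V w c'"
proof (rule ccontr)
  assume "\<not> ?thesis"
  then have le: "\<forall>y\<in>X. V w y \<le> V' w y" by auto
  have "0 < V' w c" using assms(3) by simp
  then have "w \<in> X" "c \<in> X" using state_support[OF assms(2)] by auto
  then have "row_sum X V w < row_sum X V' w"
    unfolding row_sum_def using sum_strict_mono_ex1[OF finite_X le] assms(3) by blast
  then show False using assms(1,2) \<open>w \<in> X\<close> by (simp add: state_row_sum)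
qed

lemma deficit_in_column:
  assumes "col_sum X V c \<le> col_sum X V' c" "z \<in> X" "V' z c < V z c"
  shows "\<exists>w. V w c < V' w c"
proof (rule ccontr)
  assume "\<not> ?thesis"
  then have le: "\<forall>w\<in>X. V' w c \<le> V w c" by (auto simp: not_less)
  have "col_sum X V' c < col_sum X V c"
    unfolding col_sum_def using sum_strict_mono_ex1[OF finite_X le] assms(2,3) by blast
  then show False using assms(1) by simp
qed

lemma move_into_slack_column:
  assumes V: "V \<in> states" and V': "V' \<in> states"
    and slack: "col_sum X V c < \<beta> c" and deficit: "V w c < V' w c"
  shows "\<exists>V2. (V, V2) \<in> moves \<and> l1_dist V2 V' < l1_dist V V'"
proof -
  have "0 < V' w c" using deficit by simp
  then have wc: "(w, c) \<in> E" "w \<in> X" "c \<in> X" using state_support[OF V'] by auto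
  obtain c' where c': "c' \<in> X" "V' w c' < V w c'" using excess_in_row[OF V V' deficit] by blast
  have "c' \<noteq> c" using c' deficit by auto
  have "(V, move V w c' c) \<in> moves"
    using move_edge[OF V _ _ \<open>c' \<noteq> c\<close> slack] c' wc by (simp add: nbr_def)
  moreover have "l1_dist (move V w c' c) V' < l1_dist V V'"
    using l1_dist_move_less[of w c' c V' V] wc c' \<open>c' \<noteq> c\<close> deficit by blast
  ultimately show ?thesis by blast
qed

lemma slack_deficit_gives_closer_pair:
  assumes "(W, V) \<in> moves\<^sup>*" "(W', V') \<in> moves\<^sup>*" "V \<in> states" "V' \<in> states"
    and "l1_dist V V' \<le> l1_dist W W'" "col_sum X V c < \<beta> c" "V w c < V' w c"
  shows "\<exists>U U'. (W, U) \<in> moves\<^sup>* \<and> (W', U') \<in> moves\<^sup>* \<and> l1_dist U U' < l1_dist W W'"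
proof -
  obtain V2 where "(V, V2) \<in> moves" "l1_dist V2 V' < l1_dist V V'"
    using move_into_slack_column[OF assms(3,4,6,7)] by blast
  moreover have "(W, V2) \<in> moves\<^sup>*" using assms(1) \<open>(V, V2) \<in> moves\<close> by simp
  ultimately show ?thesis using assms(2,5) by force
qed

lemma move_same_difference:
  assumes "\<And>x y. V x y + W' x y = V' x y + W x y" "0 < V z c" "0 < V' z c"
  shows "move V z c c' x y + W' x y = move V' z c c' x y + W x y"
  using assms(1)[of x y] assms(2,3) unfolding move_def by auto

text \<open>Columns that can be given slack in both states at once by moving tokens along chains
  of cells occupied in both states (chains of length at most \<open>k\<close>); such common moves leave
  the difference of the two states unchanged.\<close>
fun freeable :: "('a \<Rightarrow> 'a \<Rightarrow> nat) \<Rightarrow> ('a \<Rightarrow> 'a \<Rightarrow> nat) \<Rightarrow> nat \<Rightarrow> 'a set" where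
  "freeable W W' 0 = {c \<in> X. col_sum X W c < \<beta> c \<and> col_sum X W' c < \<beta> c}"
| "freeable W W' (Suc k) = freeable W W' k \<union>
     {c. \<exists>z. 0 < W z c \<and> 0 < W' z c \<and> nbr E z \<inter> freeable W W' k \<noteq> {}}"

lemma freeable_mono: "freeable W W' k \<subseteq> freeable W W' (Suc k)"
  by auto

lemma common_moves_free_freeable:
  assumes W: "W \<in> states" and W': "W' \<in> states"
  shows "c \<in> freeable W W' k \<Longrightarrow> \<exists>V V'. (W, V) \<in> moves\<^sup>* \<and> (W', V') \<in> moves\<^sup>*
     \<and> (\<forall>x y. V x y + W' x y = V' x y + W x y)
     \<and> col_sum X V c < \<beta> c \<and> col_sum X V' c < \<beta> c
     \<and> (\<forall>x y. y \<notin> freeable W W' k \<longrightarrow> V x y = W x y \<and> V' x y = W' x y)"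
proof (induction k arbitrary: c)
  case 0
  then show ?case by (intro exI[of _ W] exI[of _ W']) auto
next
  case (Suc k)
  show ?case
  proof (cases "c \<in> freeable W W' k")
    case True
    then show ?thesis using Suc.IH[OF True] freeable_mono[of W W' k] by blast
  next
    case False
    with Suc.prems obtain z c' where z: "0 < W z c" "0 < W' z c" "c' \<in> nbr E z"
      and c': "c' \<in> freeable W W' k" by auto
    from Suc.IH[OF c'] obtain V V' where paths: "(W, V) \<in> moves\<^sup>*" "(W', V') \<in> moves\<^sup>*"
      and diff: "\<forall>x y. V x y + W' x y = V' x y + W x y"
      and slack: "col_sum X V c' < \<beta> c'" "col_sum X V' c' < \<beta> c'"
      and agree: "\<forall>x y. y \<notin> freeable W W' k \<longrightarrow> V x y = W x y \<and> V' x y = W' x y" by blast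
    have "c \<noteq> c'" using False c' by auto
    have pos: "0 < V z c" "0 < V' z c" using agree False z by auto
    have states: "V \<in> states" "V' \<in> states" using paths W W' moves_path_states by auto
    have "z \<in> X" using state_support[OF W z(1)] by simp
    have "(W, move V z c c') \<in> moves\<^sup>*" "(W', move V' z c c') \<in> moves\<^sup>*"
      using paths move_edge[OF states(1) pos(1) z(3) \<open>c \<noteq> c'\<close> slack(1)]
        move_edge[OF states(2) pos(2) z(3) \<open>c \<noteq> c'\<close> slack(2)] by auto
    moreover have "col_sum X (move V z c c') c < \<beta> c" "col_sum X (move V' z c c') c < \<beta> c"
      using move_frees_source states pos \<open>z \<in> X\<close> \<open>c \<noteq> c'\<close> by auto
    moreover have "\<forall>x y. y \<notin> freeable W W' (Suc k) \<longrightarrow>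
        move V z c c' x y = W x y \<and> move V' z c c' x y = W' x y"
    proof (intro allI impI)
      fix x y assume "y \<notin> freeable W W' (Suc k)"
      then have "y \<noteq> c" "y \<noteq> c'" "y \<notin> freeable W W' k"
        using Suc.prems c' freeable_mono[of W W' k] by blast+
      then show "move V z c c' x y = W x y \<and> move V' z c c' x y = W' x y"
        using agree unfolding move_def by auto
    qed
    moreover have "\<forall>x y. move V z c c' x y + W' x y = move V' z c c' x y + W x y"
      using move_same_difference[of V W' V' W, OF _ pos] diff by blast
    ultimately show ?thesis by blast
  qed
qed

lemma deficit_beside_excess:
  assumes W: "W \<in> states" and W': "W' \<in> states"
    and balanced: "\<forall>c w. col_sum X W' c < \<beta> c \<longrightarrow> W w c \<le> W' w c"
    and excess: "W' z c < W z c"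
  shows "\<exists>w. W w c < W' w c"
proof -
  have "0 < W z c" using excess by simp
  then have "z \<in> X" "c \<in> X" using state_support[OF W] by auto
  then have "col_sum X W c \<le> col_sum X W' c"
    using balanced excess state_col_sum[OF W] by (meson le_trans not_le)
  then show ?thesis using deficit_in_column \<open>z \<in> X\<close> excess by blast
qed

lemma freeable_excess_gives_closer_pair:
  assumes W: "W \<in> states" and W': "W' \<in> states"
    and balanced: "\<forall>c w. col_sum X W' c < \<beta> c \<longrightarrow> W w c \<le> W' w c"
    and excess: "W' z c < W z c" and freeable: "c \<in> freeable W W' k"
  shows "\<exists>U U'. (W, U) \<in> moves\<^sup>* \<and> (W', U') \<in> moves\<^sup>* \<and> l1_dist U U' < l1_dist W W'"
proof -
  obtain V V' where paths: "(W, V) \<in> moves\<^sup>*" "(W', V') \<in> moves\<^sup>*"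
    and diff: "\<forall>x y. V x y + W' x y = V' x y + W x y" and slack: "col_sum X V c < \<beta> c"
    using common_moves_free_freeable[OF W W' freeable] by blast
  obtain w where "W w c < W' w c" using deficit_beside_excess[OF W W' balanced excess] by blast
  then have "V w c < V' w c" using diff by (metis add_less_cancel_left add.commute)
  moreover have "l1_dist V V' = l1_dist W W'" using diff l1_dist_same_difference by blast
  ultimately show ?thesis
    using slack_deficit_gives_closer_pair[OF paths _ _ _ slack] paths W W' moves_path_states by auto
qed

lemma excess_next_to_freeable_gives_closer_pair:
  assumes W: "W \<in> states" and W': "W' \<in> states"
    and balanced: "\<forall>c w. col_sum X W' c < \<beta> c \<longrightarrow> W w c \<le> W' w c"
    and excess: "W' z c < W z c" and "c \<notin> freeable W W' k"
    and nb: "c' \<in> nbr E z" and freeable: "c' \<in> freeable W W' k"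
  shows "\<exists>U U'. (W, U) \<in> moves\<^sup>* \<and> (W', U') \<in> moves\<^sup>* \<and> l1_dist U U' < l1_dist W W'"
proof -
  obtain V V' where paths: "(W, V) \<in> moves\<^sup>*" "(W', V') \<in> moves\<^sup>*"
    and diff: "\<forall>x y. V x y + W' x y = V' x y + W x y" and slack: "col_sum X V c' < \<beta> c'"
    and agree: "\<forall>x y. y \<notin> freeable W W' k \<longrightarrow> V x y = W x y \<and> V' x y = W' x y"
    using common_moves_free_freeable[OF W W' freeable] by blast
  have states: "V \<in> states" "V' \<in> states" using paths W W' moves_path_states by auto
  have column_c: "V x c = W x c" "V' x c = W' x c" for x using agree \<open>c \<notin> _\<close> by auto
  have "c \<noteq> c'" using \<open>c \<notin> _\<close> freeable by auto
  have "0 < W z c" using excess by simp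
  then have "z \<in> X" "c \<in> X" using state_support[OF W] by auto
  have "c' \<in> X" using nb edges_in_X by (auto simp: nbr_def)
  define V1 where "V1 = move V z c c'"
  have "(V, V1) \<in> moves"
    unfolding V1_def using move_edge[OF states(1) _ nb \<open>c \<noteq> c'\<close> slack] excess column_c by simp
  then have "(W, V1) \<in> moves\<^sup>*" "V1 \<in> states" using paths(1) W moves_path_states by auto
  moreover have "l1_dist V1 V' \<le> l1_dist W W'"
    using l1_dist_move_le[of z c c' V' V] \<open>z \<in> X\<close> \<open>c \<in> X\<close> \<open>c' \<in> X\<close> \<open>c \<noteq> c'\<close>
      excess column_c l1_dist_same_difference[of V W' V' W] diff
    unfolding V1_def by simp
  moreover have "col_sum X V1 c < \<beta> c"
    unfolding V1_def using move_frees_source[OF states(1) \<open>z \<in> X\<close> \<open>c \<noteq> c'\<close>] excess column_c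
    by simp
  moreover obtain w where "W w c < W' w c"
    using deficit_beside_excess[OF W W' balanced excess] by blast
  then have "V1 w c < V' w c"
    unfolding V1_def move_def using column_c \<open>c \<noteq> c'\<close> by auto
  ultimately show ?thesis using slack_deficit_gives_closer_pair paths(2) states(2) by blast
qed

lemma saturated_closed_columns_violate_hall:
  assumes W: "W \<in> states" and "U \<subseteq> X"
    and saturated: "\<And>c. c \<in> U \<Longrightarrow> col_sum X W c = \<beta> c"
    and closed: "\<And>z c y. c \<in> U \<Longrightarrow> 0 < W z c \<Longrightarrow> y \<in> nbr E z \<Longrightarrow> y \<in> U"
  defines "S \<equiv> {z \<in> X. \<exists>c\<in>U. 0 < W z c}"
  shows "sum \<beta> (nbr_set E S) \<le> sum \<alpha> S"
proof -
  let ?N = "nbr_set E S"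
  have "?N \<subseteq> U" using closed unfolding S_def nbr_set_def by blast
  have "S \<subseteq> X" unfolding S_def by blast
  have "W z c = 0" if "z \<in> X - S" "c \<in> U" for z c
    using that unfolding S_def by auto
  then have outside: "\<forall>z\<in>X - S. (\<Sum>c\<in>?N. W z c) = 0"
    using \<open>?N \<subseteq> U\<close> by (simp add: subset_eq)
  have "sum \<beta> ?N = (\<Sum>c\<in>?N. \<Sum>z\<in>X. W z c)"
    using saturated \<open>?N \<subseteq> U\<close> unfolding col_sum_def by (intro sum.cong) auto
  also have "\<dots> = (\<Sum>z\<in>X. \<Sum>c\<in>?N. W z c)" by (rule sum.swap)
  also have "\<dots> = (\<Sum>z\<in>S. \<Sum>c\<in>?N. W z c)"
    by (rule sum.mono_neutral_right[OF finite_X \<open>S \<subseteq> X\<close> outside])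
  also have "\<dots> \<le> (\<Sum>z\<in>S. \<Sum>c\<in>X. W z c)"
    using \<open>?N \<subseteq> U\<close> \<open>U \<subseteq> X\<close> by (intro sum_mono sum_mono2[OF finite_X]) auto
  also have "\<dots> = sum \<alpha> S"
    using state_row_sum[OF W] \<open>S \<subseteq> X\<close> unfolding row_sum_def by (intro sum.cong) auto
  finally show ?thesis .
qed

lemma distinct_states_have_excess:
  assumes "V \<in> states" "V' \<in> states" "V \<noteq> V'"
  shows "\<exists>z c. V' z c < V z c"
proof -
  obtain x y where "V x y \<noteq> V' x y" using assms(3) by blast
  then consider "V' x y < V x y" | "V x y < V' x y" by linarith
  then show ?thesis using excess_in_row[OF assms(1,2)] by cases blast+
qed

lemma unfreeable_columns_saturated_closed:
  assumes W: "W \<in> states"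
    and balanced: "\<forall>c w. col_sum X W c < \<beta> c \<longrightarrow> W' w c \<le> W w c"
    and excess_unfreeable: "\<And>z c k. W' z c < W z c \<Longrightarrow> c \<notin> freeable W W' k"
    and excess_far: "\<And>z c y k. W' z c < W z c \<Longrightarrow> y \<in> nbr E z \<Longrightarrow> y \<notin> freeable W W' k"
  defines "U \<equiv> X - (\<Union>k. freeable W W' k)"
  shows "c \<in> U \<Longrightarrow> col_sum X W c = \<beta> c"
    and "c \<in> U \<Longrightarrow> 0 < W z c \<Longrightarrow> y \<in> nbr E z \<Longrightarrow> y \<in> U"
proof -
  assume "c \<in> U"
  then have "c \<in> X" "c \<notin> freeable W W' 0" unfolding U_def by blast+
  show "col_sum X W c = \<beta> c"
  proof (rule ccontr)
    assume "col_sum X W c \<noteq> \<beta> c"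
    then have "col_sum X W c < \<beta> c" using state_col_sum[OF W \<open>c \<in> X\<close>] by simp
    moreover from this have "col_sum X W' c \<le> col_sum X W c"
      using balanced unfolding col_sum_def by (simp add: sum_mono)
    ultimately show False using \<open>c \<in> X\<close> \<open>c \<notin> freeable W W' 0\<close> by simp
  qed
next
  assume c: "c \<in> U" and pos: "0 < W z c" and y: "y \<in> nbr E z"
  have "y \<notin> freeable W W' k" for k
  proof
    assume y_freeable: "y \<in> freeable W W' k"
    show False
    proof (cases "0 < W' z c")
      case True
      then have "c \<in> freeable W W' (Suc k)" using pos y y_freeable by auto
      then show False using c unfolding U_def by blast
    next
      case False
      then have "W' z c < W z c" using pos by simp
      then show False using excess_far y y_freeable by blast
    qed
  qed
  moreover have "y \<in> X" using y edges_in_X by (auto simp: nbr_def)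
  ultimately show "y \<in> U" unfolding U_def by blast
qed

lemma balanced_states_give_closer_pair:
  assumes hall: "\<forall>A. A \<subseteq> X \<and> A \<noteq> {} \<longrightarrow> sum \<alpha> A < sum \<beta> (nbr_set E A)"
    and W: "W \<in> states" and W': "W' \<in> states" and "W \<noteq> W'"
    and balanced: "\<forall>c w. col_sum X W c < \<beta> c \<longrightarrow> W' w c \<le> W w c"
    and balanced': "\<forall>c w. col_sum X W' c < \<beta> c \<longrightarrow> W w c \<le> W' w c"
  shows "\<exists>U U'. (W, U) \<in> moves\<^sup>* \<and> (W', U') \<in> moves\<^sup>* \<and> l1_dist U U' < l1_dist W W'"
proof (rule ccontr)
  assume stuck: "\<not> ?thesis"
  have unfreeable: "c \<notin> freeable W W' k" if "W' z c < W z c" for z c k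
    using freeable_excess_gives_closer_pair[OF W W' balanced' that] stuck by blast
  have far: "y \<notin> freeable W W' k" if "W' z c < W z c" "y \<in> nbr E z" for z c y k
    using excess_next_to_freeable_gives_closer_pair[OF W W' balanced' that(1) unfreeable[OF that(1)]
        that(2)] stuck by blast
  define U where "U = X - (\<Union>k. freeable W W' k)"
  note U_props = unfreeable_columns_saturated_closed[OF W balanced unfreeable far, folded U_def]
  define S where "S = {z \<in> X. \<exists>c\<in>U. 0 < W z c}"
  obtain z c where excess: "W' z c < W z c"
    using distinct_states_have_excess[OF W W' \<open>W \<noteq> W'\<close>] by blast
  then have "0 < W z c" by simp
  moreover from this have "z \<in> X" "c \<in> X" using state_support[OF W] by auto
  moreover have "c \<in> U" using unfreeable[OF excess] \<open>c \<in> X\<close> unfolding U_def by blast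
  ultimately have "z \<in> S" unfolding S_def by blast
  moreover have "S \<subseteq> X" unfolding S_def by blast
  ultimately have "sum \<alpha> S < sum \<beta> (nbr_set E S)" using hall[rule_format, of S] by blast
  moreover have "sum \<beta> (nbr_set E S) \<le> sum \<alpha> S"
    unfolding S_def
    by (rule saturated_closed_columns_violate_hall[OF W _ U_props]) (auto simp: U_def)
  ultimately show False by simp
qed

lemma distinct_states_give_closer_pair:
  assumes hall: "\<forall>A. A \<subseteq> X \<and> A \<noteq> {} \<longrightarrow> sum \<alpha> A < sum \<beta> (nbr_set E A)"
    and W: "W \<in> states" and W': "W' \<in> states" and "W \<noteq> W'"
  shows "\<exists>U U'. (W, U) \<in> moves\<^sup>* \<and> (W', U') \<in> moves\<^sup>* \<and> l1_dist U U' < l1_dist W W'"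
proof -
  consider (slack) c w where "col_sum X W c < \<beta> c" "W w c < W' w c"
    | (slack') c w where "col_sum X W' c < \<beta> c" "W' w c < W w c"
    | (balanced) "\<forall>c w. col_sum X W c < \<beta> c \<longrightarrow> W' w c \<le> W w c"
        "\<forall>c w. col_sum X W' c < \<beta> c \<longrightarrow> W w c \<le> W' w c"
    using not_less by blast
  then show ?thesis
  proof cases
    case slack
    then show ?thesis
      using slack_deficit_gives_closer_pair[OF rtrancl_refl rtrancl_refl W W' order.refl slack] by blast
  next
    case slack'
    then obtain V' V where "(W', V') \<in> moves\<^sup>*" "(W, V) \<in> moves\<^sup>*" "l1_dist V' V < l1_dist W' W"
      using slack_deficit_gives_closer_pair[OF rtrancl_refl rtrancl_refl W' W order.refl slack'] by blast
    then show ?thesis using l1_dist_commute[of V' V] l1_dist_commute[of W' W] by auto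
  next
    case balanced
    then show ?thesis using balanced_states_give_closer_pair[OF hall W W' \<open>W \<noteq> W'\<close>] by blast
  qed
qed

lemma states_connected:
  assumes hall: "\<forall>A. A \<subseteq> X \<and> A \<noteq> {} \<longrightarrow> sum \<alpha> A < sum \<beta> (nbr_set E A)"
  shows "W \<in> states \<Longrightarrow> W' \<in> states \<Longrightarrow> (W, W') \<in> moves\<^sup>*"
proof (induction "nat (l1_dist W W')" arbitrary: W W' rule: less_induct)
  case less
  show ?case
  proof (cases "W = W'")
    case False
    obtain V V' where paths: "(W, V) \<in> moves\<^sup>*" "(W', V') \<in> moves\<^sup>*"
      and closer: "l1_dist V V' < l1_dist W W'"
      using distinct_states_give_closer_pair[OF hall less.prems False] by blast
    have "V \<in> states" "V' \<in> states" using paths less.prems moves_path_states by auto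
    moreover have "nat (l1_dist V V') < nat (l1_dist W W')"
      using closer l1_dist_nonneg[of V V'] by simp
    ultimately have "(V, V') \<in> moves\<^sup>*" using less.hyps by blast
    then show ?thesis using paths moves_path_sym by (meson rtrancl_trans)
  qed simp
qed

end

theorem proposition3:
  fixes X :: "'a set" and E :: "('a \<times> 'a) set" and \<alpha> \<beta> :: "'a \<Rightarrow> nat"
  assumes "finite X"
    and "E \<subseteq> X \<times> X"
    and "\<forall>A. A \<subseteq> X \<and> A \<noteq> {} \<longrightarrow> (\<Sum>x\<in>A. \<alpha> x) < (\<Sum>y\<in>nbr_set E A. \<beta> y)"
  shows "L_connected X E \<alpha> \<beta>"
proof -
  interpret allocation X E \<alpha> \<beta> using assms(1,2) by unfold_locales
  show ?thesis unfolding L_connected_def using states_connected[OF assms(3)] by blast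
qed

end
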